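(* Let $\rho_n$ be the number of distinct Manacher arrays of strings of length $n$ and $\sigma_n$ the number of counter arrays of length $n$. Then $\rho_n\le\sigma_n$; more precisely, $\rho_n$ is at most the number of distinct sequences $(c_1,\dots,c_n)$ arising from strings of length $n$, where $c_i$ is the center of the longest palindromic suffix of $S[1..i]$.
   Context: The center of $S[a..b]$ is $(a+b)/2$. The Manacher array of a string $S$ of length $n$ is the array $\mathsf A[1..2n-1]$ where, for $i=2k-1$, $\mathsf A[i]$ is the largest $r\ge 0$ with $1\le k-r$, $k+r\le n$ and $S[k-r..k+r]$ a palindrome, and for $i=2k$, $\mathsf A[i]$ is the largest $r\ge0$ with $1\le k-r+1$, $k+r\le n$ and $S[k-r+1..k+r]$ a palindrome. A counter array of length $n$ is an integer array $(a_1,\dots,a_n)$ with $1\le a_i\le i$ and $a_{i+1}\ge a_i-1$ for $1\le i<n$. *)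

theory Defs
  imports Complex_Main
begin

text \<open>Strings are lists; position j (1-based) of S is S ! (j - 1).
  is_pal S a b: the factor S[a..b] (1-based, inclusive) is a palindrome
  (vacuously true when b < a, i.e. for the empty factor).\<close>
definition is_pal :: "'a list \<Rightarrow> nat \<Rightarrow> nat \<Rightarrow> bool" where
  "is_pal S a b \<longleftrightarrow> (\<forall>j. a \<le> j \<and> j \<le> b \<longrightarrow> S ! (j - 1) = S ! (a + b - j - 1))"

definition manacher_entry :: "'a list \<Rightarrow> nat \<Rightarrow> nat" where
  "manacher_entry S i =
     (let n = length S; k = (i + 1) div 2 in
      if odd i then Max {r. 1 + r \<le> k \<and> k + r \<le> n \<and> is_pal S (k - r) (k + r)}
      else Max {r. r \<le> k \<and> k + r \<le> n \<and> is_pal S (k - r + 1) (k + r)})"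

text \<open>The Manacher array A[1..2n-1] as a list (element i-1 of the list is A[i]).\<close>
definition manacher :: "'a list \<Rightarrow> nat list" where
  "manacher S = map (manacher_entry S) [1..<2 * length S]"

definition lps_start :: "'a list \<Rightarrow> nat \<Rightarrow> nat" where
  "lps_start S i = Min {a. 1 \<le> a \<and> a \<le> i \<and> is_pal S a i}"

definition center_seq :: "'a list \<Rightarrow> real list" where
  "center_seq S = map (\<lambda>i. real (lps_start S i + i) / 2) [1..<length S + 1]"

text \<open>Counter arrays of length n (list element i-1 is a_i).\<close>
definition counter_arrays :: "nat \<Rightarrow> nat list set" where
  "counter_arrays n = {a. length a = n \<and>
       (\<forall>i < n. 1 \<le> a ! i \<and> a ! i \<le> i + 1) \<and>
       (\<forall>i. i + 1 < n \<longrightarrow> a ! (i + 1) \<ge> a ! i - 1)}"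

definition rho :: "'a itself \<Rightarrow> nat \<Rightarrow> nat" where
  "rho _ n = card {manacher (S :: 'a list) | S. length S = n}"

definition num_center_seqs :: "'a itself \<Rightarrow> nat \<Rightarrow> nat" where
  "num_center_seqs _ n = card {center_seq (S :: 'a list) | S. length S = n}"

definition sigma :: "nat \<Rightarrow> nat" where
  "sigma n = card (counter_arrays n)"

end

theory Submission
  imports Defs
begin

text \<open>The longest palindromic suffixes determine every palindromic factor: if S[a..r] is the
  longest palindromic suffix of S[1..r], then S[l..r] is not a palindrome for l < a, and for
  l > a it is one iff its mirror image S[a..a+r-l] inside S[a..r] is, a factor ending before r.
  So by induction on r the Manacher array is a function of the start positions of the longest
  palindromic suffixes, equivalently of their centers. These start positions form a counter
  array: removing both ends of the palindrome S[a..i+1] leaves the palindrome S[a+1..i].\<close>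

lemma is_palD: "is_pal S a b \<Longrightarrow> a \<le> j \<Longrightarrow> j \<le> b \<Longrightarrow> S ! (j - 1) = S ! (a + b - j - 1)"
  unfolding is_pal_def by blast

lemma is_pal_reflect:
  assumes outer: "is_pal S a r" and "a \<le> l" "l \<le> m" "m \<le> r" and inner: "is_pal S l m"
  shows "is_pal S (a + r - m) (a + r - l)"
  unfolding is_pal_def
proof (intro allI impI)
  fix j assume j: "a + r - m \<le> j \<and> j \<le> a + r - l"
  have "S ! (j - 1) = S ! (a + r - j - 1)"
    using j assms(2-4) by (intro is_palD[OF outer]) auto
  also have "\<dots> = S ! (l + m - (a + r - j) - 1)"
    using j assms(2-4) by (intro is_palD[OF inner]) auto
  also have "\<dots> = S ! (a + r - (l + m - (a + r - j)) - 1)"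
    using j assms(2-4) by (intro is_palD[OF outer]) auto
  also have "a + r - (l + m - (a + r - j)) = (a + r - m) + (a + r - l) - j"
    using j assms(2-4) by linarith
  finally show "S ! (j - 1) = S ! ((a + r - m) + (a + r - l) - j - 1)" .
qed

lemma is_pal_reflect_iff:
  assumes "is_pal S a r" and "a \<le> l" "l \<le> m" "m \<le> r"
  shows "is_pal S l m \<longleftrightarrow> is_pal S (a + r - m) (a + r - l)"
proof
  show "is_pal S (a + r - m) (a + r - l)" if "is_pal S l m"
    using is_pal_reflect[OF assms that] .
next
  assume reflected: "is_pal S (a + r - m) (a + r - l)"
  have "is_pal S (a + r - (a + r - l)) (a + r - (a + r - m))"
    using assms by (intro is_pal_reflect[OF assms(1) _ _ _ reflected]) auto
  with assms show "is_pal S l m" by simp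
qed

lemma is_pal_inner: "is_pal S a b \<Longrightarrow> is_pal S (Suc a) (b - 1)"
  unfolding is_pal_def by auto

lemma finite_pal_suffix_starts: "finite {a. 1 \<le> a \<and> a \<le> i \<and> is_pal S a i}"
  by (rule finite_subset[of _ "{..i}"]) auto

lemma is_pal_lps_start:
  assumes "1 \<le> i"
  shows "1 \<le> lps_start S i \<and> lps_start S i \<le> i \<and> is_pal S (lps_start S i) i"
proof -
  have "i \<in> {a. 1 \<le> a \<and> a \<le> i \<and> is_pal S a i}"
    using assms by (auto simp: is_pal_def)
  then show ?thesis
    using Min_in[OF finite_pal_suffix_starts] unfolding lps_start_def by blast
qed

lemma lps_start_le:
  assumes "1 \<le> i" "1 \<le> a" "is_pal S a i"
  shows "lps_start S i \<le> a"
proof (cases "a \<le> i")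
  case True
  then show ?thesis
    using assms unfolding lps_start_def by (intro Min_le finite_pal_suffix_starts) auto
next
  case False
  then show ?thesis using is_pal_lps_start[OF \<open>1 \<le> i\<close>, of S] by simp
qed

lemma lps_start_le_lps_start_Suc:
  assumes "1 \<le> i"
  shows "lps_start S i \<le> lps_start S (Suc i) + 1"
proof -
  have "is_pal S (Suc (lps_start S (Suc i))) i"
    using is_pal_inner[of S "lps_start S (Suc i)" "Suc i"] is_pal_lps_start[of "Suc i" S] by simp
  then show ?thesis using lps_start_le[OF assms, of "lps_start S (Suc i) + 1" S] by simp
qed

lemma is_pal_eq_if_lps_start_eq:
  assumes "\<And>i. 1 \<le> i \<Longrightarrow> i \<le> n \<Longrightarrow> lps_start S i = lps_start T i"
  shows "1 \<le> l \<Longrightarrow> r \<le> n \<Longrightarrow> is_pal S l r = is_pal T l r"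
proof (induction r arbitrary: l rule: less_induct)
  case (less r)
  show ?case
  proof (cases "l \<le> r")
    case False
    then show ?thesis by (simp add: is_pal_def)
  next
    case True
    with less.prems have "1 \<le> r" by simp
    define a where "a = lps_start S r"
    have aT: "a = lps_start T r"
      using assms \<open>1 \<le> r\<close> less.prems(2) by (simp add: a_def)
    note palS = is_pal_lps_start[of r S, folded a_def] and palT = is_pal_lps_start[of r T, folded aT]
    consider "l < a" | "l = a" | "a < l" by linarith
    then show ?thesis
    proof cases
      case 1
      have "\<not> is_pal S l r"
        using lps_start_le[of r l S] 1 \<open>1 \<le> r\<close> less.prems by (auto simp: a_def)
      moreover have "\<not> is_pal T l r"
        using lps_start_le[of r l T] 1 \<open>1 \<le> r\<close> less.prems by (auto simp: aT)
      ultimately show ?thesis by simp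
    next
      case 2
      then show ?thesis using palS palT \<open>1 \<le> r\<close> by simp
    next
      case 3
      have "is_pal S a (a + r - l) = is_pal T a (a + r - l)"
        using less.IH[of "a + r - l" a] 3 True palS \<open>1 \<le> r\<close> less.prems by simp
      then show ?thesis
        using is_pal_reflect_iff[of S a r l r] is_pal_reflect_iff[of T a r l r]
          palS palT 3 \<open>l \<le> r\<close> \<open>1 \<le> r\<close> by simp
    qed
  qed
qed

lemma map_upt_eq_map_upt_iff:
  "map f [1..<n + 1] = map g [1..<m + 1] \<longleftrightarrow> n = m \<and> (\<forall>i. 1 \<le> i \<and> i \<le> n \<longrightarrow> f i = g i)"
proof
  assume eq: "map f [1..<n + 1] = map g [1..<m + 1]"
  from arg_cong[OF eq, of length] have "n = m" by (simp del: upt_Suc)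
  with eq show "n = m \<and> (\<forall>i. 1 \<le> i \<and> i \<le> n \<longrightarrow> f i = g i)"
    by (simp del: upt_Suc)
qed (simp del: upt_Suc)

definition lps_starts :: "'a list \<Rightarrow> nat list" where
  "lps_starts S = map (lps_start S) [1..<length S + 1]"

lemma lps_starts_eq_iff:
  "lps_starts S = lps_starts T \<longleftrightarrow>
     length S = length T \<and> (\<forall>i. 1 \<le> i \<and> i \<le> length S \<longrightarrow> lps_start S i = lps_start T i)"
  unfolding lps_starts_def map_upt_eq_map_upt_iff ..

lemma center_seq_eq_iff_lps_starts_eq:
  "center_seq S = center_seq T \<longleftrightarrow> lps_starts S = lps_starts T"
  unfolding lps_starts_eq_iff center_seq_def map_upt_eq_map_upt_iff by simp

lemma manacher_eq_if_lps_starts_eq: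
  assumes "lps_starts S = lps_starts T"
  shows "manacher S = manacher T"
proof -
  have len: "length S = length T"
    and pal: "\<And>l r. 1 \<le> l \<Longrightarrow> r \<le> length S \<Longrightarrow> is_pal S l r = is_pal T l r"
    using assms is_pal_eq_if_lps_start_eq[of "length S" S T] by (auto simp: lps_starts_eq_iff)
  have "manacher_entry S i = manacher_entry T i" for i
    unfolding manacher_entry_def Let_def using len pal
    by (intro if_cong arg_cong[where f = Max] Collect_cong) auto
  then show ?thesis unfolding manacher_def using len by simp
qed

lemma lps_starts_in_counter_arrays: "lps_starts S \<in> counter_arrays (length S)"
proof -
  have nth: "lps_starts S ! i = lps_start S (Suc i)" if "i < length S" for i
    using that unfolding lps_starts_def by (simp del: upt_Suc)
  have "1 \<le> lps_starts S ! i \<and> lps_starts S ! i \<le> i + 1" if "i < length S" for i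
    using that is_pal_lps_start[of "Suc i" S] by (simp add: nth)
  moreover have "lps_starts S ! i - 1 \<le> lps_starts S ! (i + 1)" if "i + 1 < length S" for i
    using that lps_start_le_lps_start_Suc[of "Suc i" S] by (simp add: nth)
  ultimately show ?thesis
    unfolding counter_arrays_def by (simp add: lps_starts_def del: upt_Suc)
qed

lemma finite_counter_arrays: "finite (counter_arrays n)"
proof (rule finite_subset)
  show "counter_arrays n \<subseteq> {xs. set xs \<subseteq> {..n} \<and> length xs = n}"
    unfolding counter_arrays_def by (force simp: in_set_conv_nth)
qed (rule finite_lists_length_eq, simp)

lemma image_factors_through:
  assumes "\<And>x y. x \<in> A \<Longrightarrow> y \<in> A \<Longrightarrow> f x = f y \<Longrightarrow> g x = g y"
  shows "g ` A = (g \<circ> inv_into A f) ` f ` A"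
proof -
  have "g (inv_into A f (f x)) = g x" if "x \<in> A" for x
    using that by (intro assms inv_into_into f_inv_into_f) auto
  then show ?thesis
    unfolding image_image comp_def by (rule image_cong[OF refl, symmetric])
qed

theorem corollary3p6:
  "rho TYPE('a) n \<le> num_center_seqs TYPE('a) n \<and> rho TYPE('a) n \<le> sigma n"
proof -
  let ?A = "{S :: 'a list. length S = n}"
  have starts: "lps_starts ` ?A \<subseteq> counter_arrays n"
    using lps_starts_in_counter_arrays by blast
  then have fin_starts: "finite (lps_starts ` ?A)"
    using finite_counter_arrays finite_subset by blast
  have centers: "center_seq ` ?A = (center_seq \<circ> inv_into ?A lps_starts) ` lps_starts ` ?A"
    by (rule image_factors_through) (simp add: center_seq_eq_iff_lps_starts_eq)
  have manachers: "manacher ` ?A = (manacher \<circ> inv_into ?A center_seq) ` center_seq ` ?A"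
    by (rule image_factors_through)
      (metis center_seq_eq_iff_lps_starts_eq manacher_eq_if_lps_starts_eq)
  have "card (manacher ` ?A) \<le> card (center_seq ` ?A)"
    unfolding manachers using fin_starts by (intro card_image_le) (simp add: centers)
  moreover have "card (center_seq ` ?A) \<le> card (lps_starts ` ?A)"
    unfolding centers using fin_starts by (rule card_image_le)
  moreover have "card (lps_starts ` ?A) \<le> sigma n"
    unfolding sigma_def using finite_counter_arrays starts by (rule card_mono)
  ultimately show ?thesis
    unfolding rho_def num_center_seqs_def setcompr_eq_image by linarith
qed

end
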